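(* Let $H$ be a numerical semigroup, $k$ a field, $R=k[H]$ Gorenstein, $a=\mathrm{a}(R)$, and let $\mathcal{X}_R$ be the set of graded ideals $I$ of $R$ with $R/I$ Gorenstein and $\mu_R(I)\ge 2$. Then $$\mathcal{X}_R=\{R:_Rt^m,\ t^m(R:_Rt^m)\mid m\in\mathbb{N}\setminus H\}.$$ Moreover, for each $m\in\mathbb{N}\setminus H$, $\mathrm{a}(R/(R:_Rt^m))=a-m$ and $\mathrm{a}(R/t^m(R:_Rt^m))=a+m$.
   Context: $R=k[H]=k[t^h\mid h\in H]\subseteq k[t]$ graded by $\deg t=1$; $R:_Rt^m=\{x\in R\mid xt^m\in R\}$. $\mathrm{a}(R)=\mathrm{c}(H)-1=\max(\mathbb{Z}\setminus H)$ with $\mathrm{c}(H)$ the conductor of $H$; for an Artinian graded quotient $R/I$, $\mathrm{a}(R/I)$ is the largest $n$ with $[R/I]_n\neq 0$. $R$ Gorenstein is equivalent to $H$ symmetric. *)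

theory Defs
  imports "HOL-Computational_Algebra.Polynomial"
begin

definition numerical_semigroup :: "nat set \<Rightarrow> bool" where
  "numerical_semigroup H \<longleftrightarrow> 0 \<in> H \<and> (\<forall>a\<in>H. \<forall>b\<in>H. a + b \<in> H) \<and> finite (- H)"

text \<open>Frobenius number max(Z minus H) = c(H) - 1 = a(R); equals -1 if H = N.\<close>
definition frob :: "nat set \<Rightarrow> int" where
  "frob H = Max ({-1} \<union> int ` (- H))"

definition symmetric_sg :: "nat set \<Rightarrow> bool" where
  "symmetric_sg H \<longleftrightarrow> (\<forall>z::int. z \<in> int ` H \<longleftrightarrow> frob H - z \<notin> int ` H)"

definition sgring :: "nat set \<Rightarrow> 'a::field poly set" where
  "sgring H = {p. \<forall>n. coeff p n \<noteq> 0 \<longrightarrow> n \<in> H}"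

definition ideal_of :: "nat set \<Rightarrow> 'a::field poly set \<Rightarrow> bool" where
  "ideal_of H I \<longleftrightarrow> I \<subseteq> sgring H \<and> 0 \<in> I \<and> (\<forall>x\<in>I. \<forall>y\<in>I. x + y \<in> I)
     \<and> (\<forall>r\<in>sgring H. \<forall>x\<in>I. r * x \<in> I)"

definition graded_ideal :: "nat set \<Rightarrow> 'a::field poly set \<Rightarrow> bool" where
  "graded_ideal H I \<longleftrightarrow> ideal_of H I \<and> (\<forall>x\<in>I. \<forall>n. monom (coeff x n) n \<in> I)"

definition colon :: "nat set \<Rightarrow> nat \<Rightarrow> 'a::field poly set" where
  "colon H m = {x \<in> sgring H. x * monom 1 m \<in> sgring H}"

definition shifted_colon :: "nat set \<Rightarrow> nat \<Rightarrow> 'a::field poly set" where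
  "shifted_colon H m = (\<lambda>x. monom 1 m * x) ` colon H m"

definition mu :: "nat set \<Rightarrow> 'a::field poly set \<Rightarrow> nat" where
  "mu H I = (LEAST n. \<exists>G. finite G \<and> card G = n \<and> G \<subseteq> I \<and>
       I = {\<Sum>g\<in>G. r g * g | r. \<forall>g\<in>G. r g \<in> sgring H})"

text \<open>Socle preimage: elements p of R with p * R_+ in I, R_+ the graded maximal ideal.\<close>
definition socle :: "nat set \<Rightarrow> 'a::field poly set \<Rightarrow> 'a poly set" where
  "socle H I = {p \<in> sgring H. \<forall>q\<in>sgring H. coeff q 0 = 0 \<longrightarrow> p * q \<in> I}"

text \<open>For I = 0, R/I = R, Gorenstein iff H symmetric;
  for I nonzero graded, R/I is Artinian graded with residue field k, and it is Gorenstein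
  iff its socle (socle H I)/I is a one-dimensional k-vector space.\<close>
definition gorenstein_quot :: "nat set \<Rightarrow> 'a::field poly set \<Rightarrow> bool" where
  "gorenstein_quot H I \<longleftrightarrow>
     (if I = {0} then symmetric_sg H
      else (\<exists>p\<in>socle H I. p \<notin> I \<and> (\<forall>s\<in>socle H I. \<exists>c. s - smult c p \<in> I)))"

definition a_quot :: "nat set \<Rightarrow> 'a::field poly set \<Rightarrow> nat" where
  "a_quot H I = Max {n. \<exists>c. monom c n \<in> sgring H \<and> monom c n \<notin> I}"

end

theory Submission
  imports Defs
begin

text \<open>
  A graded ideal \<open>I\<close> of \<open>R = k[H]\<close> is spanned by the monomials it contains, so it is determined
  by its exponent set \<open>E\<close>, a semigroup ideal of \<open>H\<close>. The socle of \<open>R/I\<close> is spanned by the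
  monomials \<open>t\<^sup>n\<close> with \<open>n \<notin> E\<close> and \<open>n + (H - {0}) \<subseteq> E\<close>, so \<open>R/I\<close> is Gorenstein iff there is exactly
  one such \<open>n = s\<close>; since every exponent of \<open>R/I\<close> lies below a socle exponent, this happens iff
  \<open>E\<close> consists of the elements of \<open>H\<close> that do not divide \<open>s\<close> in \<open>H\<close>, and then \<open>a(R/I) = s\<close>.
  Such an ideal needs two generators iff \<open>E\<close> is not a translate \<open>d + H\<close>. When \<open>H\<close> is symmetric
  with Frobenius number \<open>F\<close>, the exponent sets of \<open>R :\<^sub>R t\<^sup>m\<close> and \<open>t\<^sup>m(R :\<^sub>R t\<^sup>m)\<close> are exactly
  those attached to \<open>s = F - m\<close> and \<open>s = F + m\<close>, and these are non-principal iff \<open>m \<notin> H\<close>.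
\<close>

section \<open>Polynomials supported on a set of exponents\<close>

definition supported_polys :: "nat set \<Rightarrow> 'a::zero poly set" where
  "supported_polys E = {p. \<forall>n. coeff p n \<noteq> 0 \<longrightarrow> n \<in> E}"

lemma mem_supported_polys: "p \<in> supported_polys E \<longleftrightarrow> (\<forall>n. coeff p n \<noteq> 0 \<longrightarrow> n \<in> E)"
  by (simp add: supported_polys_def)

lemma sgring_eq_supported_polys: "sgring H = supported_polys H"
  by (simp add: sgring_def supported_polys_def)

lemma monom_mem_supported_polys [simp]: "monom c n \<in> supported_polys E \<longleftrightarrow> c = 0 \<or> n \<in> E"
  by (auto simp: supported_polys_def)

lemma zero_mem_supported_polys [simp]: "0 \<in> supported_polys E"
  by (simp add: supported_polys_def)

lemma add_mem_supported_polys: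
  "p \<in> supported_polys E \<Longrightarrow> q \<in> supported_polys E \<Longrightarrow> p + q \<in> supported_polys E"
  by (auto simp: supported_polys_def) (metis add.right_neutral)

lemma sum_mem_supported_polys:
  "(\<And>i. i \<in> A \<Longrightarrow> f i \<in> supported_polys E) \<Longrightarrow> sum f A \<in> supported_polys E"
  by (induction A rule: infinite_finite_induct) (auto intro: add_mem_supported_polys)

lemma supported_polys_mono: "E \<subseteq> E' \<Longrightarrow> supported_polys E \<subseteq> supported_polys E'"
  by (auto simp: supported_polys_def)

lemma supported_polys_empty: "supported_polys {} = {0}"
  by (auto simp: supported_polys_def poly_eq_iff)

lemma supported_polys_eq_zero_iff:
  "supported_polys E = ({0} :: 'a::zero_neq_one poly set) \<longleftrightarrow> E = {}"
proof
  assume "supported_polys E = ({0} :: 'a poly set)"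
  then have "monom (1::'a) n \<notin> supported_polys E \<or> monom (1::'a) n = 0" for n
    by blast
  then show "E = {}"
    by auto
qed (simp add: supported_polys_empty)

lemma coeff_mult_nonzeroE:
  fixes p q :: "'a::comm_semiring_0 poly"
  assumes "coeff (p * q) n \<noteq> 0"
  obtains i where "i \<le> n" "coeff p i \<noteq> 0" "coeff q (n - i) \<noteq> 0"
proof -
  from assms obtain i where "i \<le> n" "coeff p i * coeff q (n - i) \<noteq> 0"
    by (metis (no_types, lifting) atMost_iff coeff_mult sum.neutral)
  then show thesis
    using that mult_not_zero by blast
qed

lemma mult_mem_supported_polys:
  fixes r x :: "'a::comm_semiring_0 poly"
  assumes "\<And>a b. a \<in> A \<Longrightarrow> b \<in> E \<Longrightarrow> a + b \<in> E"
    and "r \<in> supported_polys A" "x \<in> supported_polys E"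
  shows "r * x \<in> supported_polys E"
  unfolding mem_supported_polys
proof (intro allI impI)
  fix n
  assume "coeff (r * x) n \<noteq> 0"
  then obtain i where "i \<le> n" "coeff r i \<noteq> 0" "coeff x (n - i) \<noteq> 0"
    by (rule coeff_mult_nonzeroE)
  with assms show "n \<in> E"
    by (metis le_add_diff_inverse mem_supported_polys)
qed

lemma image_mult_monom_supported_polys:
  "(\<lambda>x. monom 1 j * x) ` supported_polys A
     = (supported_polys ((+) j ` A) :: 'a::comm_semiring_1 poly set)"
proof
  show "(\<lambda>x. monom 1 j * x) ` supported_polys A \<subseteq> (supported_polys ((+) j ` A) :: 'a poly set)"
  proof (clarsimp simp: mem_supported_polys)
    fix x :: "'a poly" and k
    assume "\<forall>n. coeff x n \<noteq> 0 \<longrightarrow> n \<in> A" "coeff (monom 1 j * x) k \<noteq> 0"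
    then have "j \<le> k" "k - j \<in> A"
      by (auto simp: coeff_monom_mult split: if_splits)
    then show "k \<in> (+) j ` A"
      by (metis image_eqI le_add_diff_inverse)
  qed
next
  show "(supported_polys ((+) j ` A) :: 'a poly set) \<subseteq> (\<lambda>x. monom 1 j * x) ` supported_polys A"
  proof
    fix q :: "'a poly"
    assume q: "q \<in> supported_polys ((+) j ` A)"
    have "coeff q k = coeff (monom 1 j * poly_shift j q) k" for k
    proof (cases "j \<le> k")
      case False
      then have "k \<notin> (+) j ` A"
        by auto
      with q False show ?thesis
        by (auto simp: mem_supported_polys coeff_monom_mult)
    qed (simp add: coeff_monom_mult coeff_poly_shift)
    then have "q = monom 1 j * poly_shift j q"
      by (rule poly_eqI)
    moreover have "poly_shift j q \<in> supported_polys A"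
      using q by (auto simp: mem_supported_polys coeff_poly_shift)
    ultimately show "q \<in> (\<lambda>x. monom 1 j * x) ` supported_polys A"
      by blast
  qed
qed

lemma mem_if_monoms_mem:
  fixes p :: "'a::comm_monoid_add poly"
  assumes "0 \<in> S" "\<And>x y. x \<in> S \<Longrightarrow> y \<in> S \<Longrightarrow> x + y \<in> S" "\<And>i. monom (coeff p i) i \<in> S"
  shows "p \<in> S"
proof -
  have "(\<Sum>i\<le>degree p. monom (coeff p i) i) \<in> S"
    by (induction rule: finite_induct[OF finite_atMost]) (use assms in auto)
  then show ?thesis
    by (simp add: poly_as_sum_of_monoms)
qed

section \<open>Graded ideals, colon ideals and socles\<close>

definition sg_ideal :: "nat set \<Rightarrow> nat set \<Rightarrow> bool" where
  "sg_ideal H E \<longleftrightarrow> E \<subseteq> H \<and> (\<forall>a\<in>H. \<forall>b\<in>E. a + b \<in> E)"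

lemma graded_ideal_eq_supported_polys:
  fixes I :: "'a::field poly set"
  assumes "0 \<in> H" "graded_ideal H I"
  shows "sg_ideal H {n. monom 1 n \<in> I}" "I = supported_polys {n. monom 1 n \<in> I}"
proof -
  have sub: "I \<subseteq> supported_polys H" and zero: "0 \<in> I"
    and add: "\<And>x y. x \<in> I \<Longrightarrow> y \<in> I \<Longrightarrow> x + y \<in> I"
    and mult: "\<And>r x. r \<in> supported_polys H \<Longrightarrow> x \<in> I \<Longrightarrow> r * x \<in> I"
    and homog: "\<And>x n. x \<in> I \<Longrightarrow> monom (coeff x n) n \<in> I"
    using assms(2) by (auto simp: graded_ideal_def ideal_of_def sgring_eq_supported_polys)
  have scale: "monom c n \<in> I" if "monom c' n \<in> I" "c' \<noteq> 0" for c c' :: 'a and n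
    using mult[OF _ that(1), of "monom (c / c') 0"] assms(1) that(2) by (simp add: mult_monom)
  show "sg_ideal H {n. monom 1 n \<in> I}"
    using sub mult[of "monom 1 _" "monom 1 _"] by (auto simp: sg_ideal_def mult_monom)
  show "I = supported_polys {n. monom 1 n \<in> I}"
  proof
    show "I \<subseteq> supported_polys {n. monom 1 n \<in> I}"
      using homog scale by (fastforce simp: mem_supported_polys)
    show "supported_polys {n. monom 1 n \<in> I} \<subseteq> I"
    proof
      fix p :: "'a poly"
      assume p: "p \<in> supported_polys {n. monom 1 n \<in> I}"
      show "p \<in> I"
      proof (rule mem_if_monoms_mem[OF zero add])
        show "monom (coeff p i) i \<in> I" for i
          using p zero scale[of 1 i "coeff p i"]
          by (cases "coeff p i = 0") (auto simp: mem_supported_polys)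
      qed
    qed
  qed
qed

lemma graded_ideal_supported_polys:
  assumes "sg_ideal H E"
  shows "graded_ideal H (supported_polys E :: 'a::field poly set)"
proof -
  have E: "E \<subseteq> H" "\<And>a b. a \<in> H \<Longrightarrow> b \<in> E \<Longrightarrow> a + b \<in> E"
    using assms by (auto simp: sg_ideal_def)
  have "monom (coeff x n) n \<in> supported_polys E" if "x \<in> supported_polys E" for x :: "'a poly" and n
    using that by (simp add: mem_supported_polys)
  then show ?thesis
    using supported_polys_mono[OF E(1)] mult_mem_supported_polys[of H E, OF E(2)]
      add_mem_supported_polys
    by (auto simp: graded_ideal_def ideal_of_def sgring_eq_supported_polys)
qed

lemma graded_ideal_iff_supported_polys:
  fixes I :: "'a::field poly set"
  assumes "0 \<in> H"
  shows "graded_ideal H I \<longleftrightarrow> (\<exists>E. sg_ideal H E \<and> I = supported_polys E)"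
  using graded_ideal_eq_supported_polys[OF assms] graded_ideal_supported_polys by blast

definition colon_exps :: "nat set \<Rightarrow> nat \<Rightarrow> nat set" where
  "colon_exps H m = {n \<in> H. n + m \<in> H}"

lemma colon_eq_supported_polys: "colon H m = supported_polys (colon_exps H m)"
proof -
  have "x * monom 1 m \<in> supported_polys H \<longleftrightarrow> (\<forall>n. coeff x n \<noteq> 0 \<longrightarrow> n + m \<in> H)"
    for x :: "'a poly"
    by (auto simp: mem_supported_polys mult.commute[of x] coeff_monom_mult)
  then show ?thesis
    by (auto simp: colon_def colon_exps_def supported_polys_def sgring_def)
qed

lemma shifted_colon_eq_supported_polys:
  "shifted_colon H m = supported_polys ((+) m ` colon_exps H m)"
  by (simp add: shifted_colon_def colon_eq_supported_polys image_mult_monom_supported_polys)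

definition socle_exps :: "nat set \<Rightarrow> nat set \<Rightarrow> nat set" where
  "socle_exps H E = {n \<in> H. \<forall>h\<in>H. 0 < h \<longrightarrow> n + h \<in> E}"

lemma socle_supported_polys:
  "socle H (supported_polys E) = (supported_polys (socle_exps H E) :: 'a::field poly set)"
proof
  show "socle H (supported_polys E) \<subseteq> (supported_polys (socle_exps H E) :: 'a poly set)"
  proof
    fix p :: "'a poly"
    assume "p \<in> socle H (supported_polys E)"
    then have pH: "p \<in> supported_polys H"
      and kills: "\<And>q. q \<in> supported_polys H \<Longrightarrow> coeff q 0 = 0 \<Longrightarrow> p * q \<in> supported_polys E"
      by (auto simp: socle_def sgring_eq_supported_polys)
    have "n + h \<in> E" if "coeff p n \<noteq> 0" "h \<in> H" "0 < h" for n h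
    proof -
      have "p * monom 1 h \<in> supported_polys E"
        using kills[of "monom 1 h"] that by simp
      moreover have "coeff (p * monom 1 h) (n + h) = coeff p n"
        by (simp add: mult.commute[of p] coeff_monom_mult)
      ultimately show ?thesis
        using that(1) by (auto simp: mem_supported_polys)
    qed
    with pH show "p \<in> supported_polys (socle_exps H E)"
      by (auto simp: mem_supported_polys socle_exps_def)
  qed
next
  show "(supported_polys (socle_exps H E) :: 'a poly set) \<subseteq> socle H (supported_polys E)"
  proof
    fix p :: "'a poly"
    assume p: "p \<in> supported_polys (socle_exps H E)"
    have "p * q \<in> supported_polys E"
      if q: "q \<in> supported_polys H" "coeff q 0 = 0" for q
      unfolding mem_supported_polys
    proof (intro allI impI)
      fix n
      assume "coeff (p * q) n \<noteq> 0"
      then obtain i where "i \<le> n" "coeff p i \<noteq> 0" "coeff q (n - i) \<noteq> 0"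
        by (rule coeff_mult_nonzeroE)
      moreover have "n - i \<noteq> 0"
        using q(2) \<open>coeff q (n - i) \<noteq> 0\<close> by auto
      ultimately have "i \<in> socle_exps H E" "n - i \<in> H" "0 < n - i" "i \<le> n"
        using p q(1) by (auto simp: mem_supported_polys)
      then show "n \<in> E"
        by (auto simp: socle_exps_def)
    qed
    moreover have "p \<in> supported_polys H"
      using p supported_polys_mono[of "socle_exps H E" H] by (auto simp: socle_exps_def)
    ultimately show "p \<in> socle H (supported_polys E)"
      by (auto simp: socle_def sgring_eq_supported_polys)
  qed
qed

lemma one_dim_modulo_supported_polys_iff:
  "(\<exists>p\<in>supported_polys S. p \<notin> supported_polys E
      \<and> (\<forall>q\<in>supported_polys S. \<exists>c. q - smult c p \<in> (supported_polys E :: 'a::field poly set)))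
   \<longleftrightarrow> (\<exists>!s. s \<in> S - E)"
  (is "(\<exists>p\<in>?S. p \<notin> ?I \<and> (\<forall>q\<in>?S. \<exists>c. q - smult c p \<in> ?I)) \<longleftrightarrow> _")
proof
  assume "\<exists>p\<in>?S. p \<notin> ?I \<and> (\<forall>q\<in>?S. \<exists>c. q - smult c p \<in> ?I)"
  then obtain p where p: "p \<in> ?S" "p \<notin> ?I" and gen: "\<And>q. q \<in> ?S \<Longrightarrow> \<exists>c. q - smult c p \<in> ?I"
    by blast
  obtain s where s: "coeff p s \<noteq> 0" "s \<notin> E"
    using p(2) by (auto simp: mem_supported_polys)
  have "coeff p t' = 0" if t: "t \<in> S - E" "t' \<notin> E" "t' \<noteq> t" for t t'
  proof -
    obtain c where c: "monom 1 t - smult c p \<in> ?I"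
      using gen[of "monom 1 t"] t(1) by auto
    then have "coeff (monom 1 t - smult c p) t = 0" "coeff (monom 1 t - smult c p) t' = 0"
      using t(1,2) unfolding mem_supported_polys by blast+
    then have "c * coeff p t = 1" "c * coeff p t' = 0"
      using t(3) by simp_all
    then show ?thesis
      by (metis mult_eq_0_iff mult_zero_left zero_neq_one)
  qed
  moreover have "s \<in> S"
    using p(1) s(1) by (auto simp: mem_supported_polys)
  ultimately show "\<exists>!s. s \<in> S - E"
    using s by blast
next
  assume "\<exists>!s. s \<in> S - E"
  then obtain s where s: "s \<in> S" "s \<notin> E" and uniq: "\<And>t. t \<in> S \<Longrightarrow> t \<notin> E \<Longrightarrow> t = s"
    by blast
  have "q - smult (coeff q s) (monom 1 s) \<in> ?I" if "q \<in> ?S" for q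
    using that uniq by (auto simp: mem_supported_polys)
  then show "\<exists>p\<in>?S. p \<notin> ?I \<and> (\<forall>q\<in>?S. \<exists>c. q - smult c p \<in> ?I)"
    using s by (auto intro!: bexI[of _ "monom 1 s"])
qed

lemma gorenstein_quot_supported_polys_iff:
  assumes "E \<noteq> {}"
  shows "gorenstein_quot H (supported_polys E :: 'a::field poly set)
           \<longleftrightarrow> (\<exists>!s. s \<in> socle_exps H E - E)"
proof -
  have "supported_polys E \<noteq> ({0} :: 'a poly set)"
    using assms supported_polys_eq_zero_iff by blast
  then show ?thesis
    by (simp add: gorenstein_quot_def socle_supported_polys one_dim_modulo_supported_polys_iff)
qed

section \<open>Exponent sets with a single socle element\<close>

lemma mem_add_image_iff: "n \<in> (+) m ` C \<longleftrightarrow> m \<le> n \<and> n - m \<in> C"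
  for m n :: nat
  by (auto simp: image_iff) (metis le_add_diff_inverse)

lemma numerical_semigroupD:
  assumes "numerical_semigroup H"
  shows "0 \<in> H" "\<And>a b. a \<in> H \<Longrightarrow> b \<in> H \<Longrightarrow> a + b \<in> H" "finite (- H)"
  using assms by (auto simp: numerical_semigroup_def)

lemma cofinite_nat_setE:
  assumes "finite (- H :: nat set)"
  obtains B where "\<And>n. B < n \<Longrightarrow> n \<in> H"
  using assms finite_nat_set_iff_bounded_le[of "- H"] by (meson ComplI not_le)

definition nondivisors :: "nat set \<Rightarrow> nat \<Rightarrow> nat set" where
  "nondivisors H s = {n \<in> H. \<not> (n \<le> s \<and> s - n \<in> H)}"

lemma sg_ideal_nondivisors:
  assumes "\<And>a b. a \<in> H \<Longrightarrow> b \<in> H \<Longrightarrow> a + b \<in> H"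
  shows "sg_ideal H (nondivisors H s)"
  unfolding sg_ideal_def
proof (intro conjI ballI)
  fix a b
  assume a: "a \<in> H" and b: "b \<in> nondivisors H s"
  have "\<not> (a + b \<le> s \<and> s - (a + b) \<in> H)"
  proof
    assume "a + b \<le> s \<and> s - (a + b) \<in> H"
    then have "s - b \<in> H" and "b \<le> s"
      using assms[of "s - (a + b)" a] a by (simp_all add: algebra_simps)
    with b show False
      by (simp add: nondivisors_def)
  qed
  with a b assms show "a + b \<in> nondivisors H s"
    by (simp add: nondivisors_def)
qed (auto simp: nondivisors_def)

lemma nondivisors_nonempty:
  assumes "finite (- H)"
  shows "nondivisors H s \<noteq> {}"
proof -
  obtain B where "\<And>n. B < n \<Longrightarrow> n \<in> H"
    using cofinite_nat_setE[OF assms] by blast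
  then have "s + B + 1 \<in> nondivisors H s"
    by (simp add: nondivisors_def)
  then show ?thesis
    by blast
qed

lemma Max_diff_nondivisors:
  assumes "0 \<in> H" "s \<in> H"
  shows "Max (H - nondivisors H s) = s"
proof (rule Max_eqI)
  show "finite (H - nondivisors H s)"
    by (rule finite_subset[of _ "{..s}"]) (auto simp: nondivisors_def)
qed (use assms in \<open>auto simp: nondivisors_def\<close>)

lemma socle_exps_nondivisors:
  assumes "0 \<in> H" "\<And>a b. a \<in> H \<Longrightarrow> b \<in> H \<Longrightarrow> a + b \<in> H" "s \<in> H"
  shows "socle_exps H (nondivisors H s) - nondivisors H s = {s}"
proof
  show "{s} \<subseteq> socle_exps H (nondivisors H s) - nondivisors H s"
    using assms by (auto simp: socle_exps_def nondivisors_def)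
  show "socle_exps H (nondivisors H s) - nondivisors H s \<subseteq> {s}"
  proof
    fix n
    assume "n \<in> socle_exps H (nondivisors H s) - nondivisors H s"
    then have le: "n \<le> s" "s - n \<in> H"
      and up: "\<And>h. h \<in> H \<Longrightarrow> 0 < h \<Longrightarrow> n + h \<in> nondivisors H s"
      by (auto simp: socle_exps_def nondivisors_def)
    have "s \<notin> nondivisors H s"
      using assms(1) by (simp add: nondivisors_def)
    have "n = s"
    proof (rule ccontr)
      assume "n \<noteq> s"
      then have "n + (s - n) \<in> nondivisors H s"
        using up[OF le(2)] le(1) by simp
      with le(1) \<open>s \<notin> nondivisors H s\<close> show False
        by simp
    qed
    then show "n \<in> {s}"
      by simp
  qed
qed

text \<open>The exponents of \<open>R/I\<close> of the form \<open>n + h\<close> with \<open>h \<in> H\<close> form a finite set, and its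
  largest element is a socle exponent.\<close>
lemma socle_exp_above:
  assumes H: "numerical_semigroup H" and E: "sg_ideal H E" "E \<noteq> {}"
    and n: "n \<in> H" "n \<notin> E"
  obtains h where "h \<in> H" "n + h \<in> socle_exps H E - E"
proof -
  note H0 = numerical_semigroupD(1)[OF H] and closed = numerical_semigroupD(2)[OF H]
  obtain B where B: "\<And>n. B < n \<Longrightarrow> n \<in> H"
    using cofinite_nat_setE[OF numerical_semigroupD(3)[OF H]] by blast
  obtain e where e: "e \<in> E"
    using E(2) by blast
  define T where "T = {h \<in> H. n + h \<notin> E}"
  have "T \<subseteq> {..e + B}"
  proof
    fix h
    assume h: "h \<in> T"
    show "h \<in> {..e + B}"
    proof (rule ccontr)
      assume "h \<notin> {..e + B}"
      then have "n + h - e \<in> H" and "n + h - e + e = n + h"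
        using B[of "n + h - e"] by auto
      then have "n + h \<in> E"
        using E(1) e unfolding sg_ideal_def by metis
      with h show False
        by (simp add: T_def)
    qed
  qed
  then have fin: "finite T"
    by (rule finite_subset) simp
  have "0 \<in> T"
    using H0 n by (simp add: T_def)
  define h where "h = Max T"
  have h: "h \<in> T"
    using fin \<open>0 \<in> T\<close> by (auto simp: h_def intro: Max_in)
  have "n + h + h' \<in> E" if "h' \<in> H" "0 < h'" for h'
  proof (rule ccontr)
    assume "n + h + h' \<notin> E"
    then have "h + h' \<in> T"
      using closed[of h h'] h that(1) by (simp add: T_def add.assoc)
    then show False
      using Max_ge[OF fin] that(2) by (fastforce simp: h_def)
  qed
  with h closed n have "n + h \<in> socle_exps H E - E"
    by (simp add: T_def socle_exps_def)
  moreover have "h \<in> H"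
    using h by (simp add: T_def)
  ultimately show thesis
    by (rule that[rotated])
qed

lemma subset_nondivisors:
  assumes "sg_ideal H E" "s \<notin> E"
  shows "E \<subseteq> nondivisors H s"
proof
  fix n
  assume n: "n \<in> E"
  have "\<not> (n \<le> s \<and> s - n \<in> H)"
  proof
    assume divides: "n \<le> s \<and> s - n \<in> H"
    then have "(s - n) + n \<in> E"
      using assms(1) n unfolding sg_ideal_def by blast
    with assms(2) divides show False
      by simp
  qed
  with n assms(1) show "n \<in> nondivisors H s"
    by (auto simp: sg_ideal_def nondivisors_def)
qed

lemma unique_socle_exp_iff_nondivisors:
  assumes H: "numerical_semigroup H" and E: "sg_ideal H E" "E \<noteq> {}"
  shows "(\<exists>!s. s \<in> socle_exps H E - E) \<longleftrightarrow> (\<exists>s\<in>H. E = nondivisors H s)"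
proof
  assume "\<exists>!s. s \<in> socle_exps H E - E"
  then obtain s where s: "s \<in> socle_exps H E" "s \<notin> E"
    and uniq: "\<And>t. t \<in> socle_exps H E - E \<Longrightarrow> t = s"
    by blast
  have "nondivisors H s \<subseteq> E"
  proof
    fix n
    assume n: "n \<in> nondivisors H s"
    show "n \<in> E"
    proof (rule ccontr)
      assume "n \<notin> E"
      then obtain h where "h \<in> H" "n + h \<in> socle_exps H E - E"
        using socle_exp_above[OF H E] n by (auto simp: nondivisors_def)
      with uniq n show False
        by (fastforce simp: nondivisors_def)
    qed
  qed
  with subset_nondivisors[OF E(1) s(2)] have "E = nondivisors H s"
    by blast
  moreover have "s \<in> H"
    using s(1) by (simp add: socle_exps_def)
  ultimately show "\<exists>s\<in>H. E = nondivisors H s"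
    by blast
next
  assume "\<exists>s\<in>H. E = nondivisors H s"
  then obtain s where "s \<in> H" "E = nondivisors H s"
    by blast
  then have "socle_exps H E - E = {s}"
    by (simp add: socle_exps_nondivisors numerical_semigroupD[OF H])
  then show "\<exists>!s. s \<in> socle_exps H E - E"
    by (metis singletonD singletonI)
qed

section \<open>Number of generators\<close>

definition sg_span :: "nat set \<Rightarrow> 'a::field poly set \<Rightarrow> 'a poly set" where
  "sg_span H G = {\<Sum>g\<in>G. r g * g | r. \<forall>g\<in>G. r g \<in> sgring H}"

lemma mu_eq_Least:
  "mu H I = (LEAST n. \<exists>G. finite G \<and> card G = n \<and> G \<subseteq> I \<and> I = sg_span H G)"
  by (simp add: mu_def sg_span_def)

lemma mu_le_card:
  assumes "finite G" "G \<subseteq> I" "I = sg_span H G"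
  shows "mu H I \<le> card G"
  unfolding mu_eq_Least by (rule Least_le) (use assms in blast)

lemma minimal_generating_setE:
  assumes "finite G" "G \<subseteq> I" "I = sg_span H G"
  obtains G' where "finite G'" "card G' = mu H I" "G' \<subseteq> I" "I = sg_span H G'"
proof -
  have "\<exists>G'. finite G' \<and> card G' = mu H I \<and> G' \<subseteq> I \<and> I = sg_span H G'"
    unfolding mu_eq_Least by (rule LeastI_ex) (use assms in blast)
  with that show thesis
    by blast
qed

lemma sg_span_empty: "sg_span H {} = {0}"
  by (auto simp: sg_span_def)

lemma sg_span_singleton: "sg_span H {g} = {r * g | r. r \<in> sgring H}"
  by (auto simp: sg_span_def)

lemma zero_mem_sg_span: "0 \<in> sg_span H G"
  by (auto simp: sg_span_def sgring_eq_supported_polys intro!: exI[of _ "\<lambda>_. 0"])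

lemma add_mem_sg_span:
  assumes "x \<in> sg_span H G" "y \<in> sg_span H G"
  shows "x + y \<in> sg_span H G"
proof -
  obtain r s where "x = (\<Sum>g\<in>G. r g * g)" "y = (\<Sum>g\<in>G. s g * g)"
    and "\<forall>g\<in>G. r g \<in> sgring H" "\<forall>g\<in>G. s g \<in> sgring H"
    using assms by (auto simp: sg_span_def)
  moreover have "(\<Sum>g\<in>G. r g * g) + (\<Sum>g\<in>G. s g * g) = (\<Sum>g\<in>G. (r g + s g) * g)"
    by (simp add: sum.distrib distrib_right)
  ultimately show ?thesis
    unfolding sg_span_def sgring_eq_supported_polys
    by (auto intro!: exI[of _ "\<lambda>g. r g + s g"] add_mem_supported_polys)
qed

lemma mult_generator_mem_sg_span:
  assumes "finite G" "g \<in> G" "r \<in> sgring H"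
  shows "r * g \<in> sg_span H G"
proof -
  have "(\<Sum>g'\<in>G. (if g' = g then r else 0) * g') = (\<Sum>g'\<in>G. if g' = g then r * g else 0)"
    by (rule sum.cong) auto
  also have "\<dots> = r * g"
    using assms(1,2) by simp
  finally have "(\<Sum>g'\<in>G. (if g' = g then r else 0) * g') = r * g" .
  moreover have "\<forall>g'\<in>G. (if g' = g then r else 0) \<in> sgring H"
    using assms(3) by (simp add: sgring_eq_supported_polys)
  ultimately show ?thesis
    unfolding sg_span_def by (intro CollectI exI[of _ "\<lambda>g'. if g' = g then r else 0"]) simp
qed

lemma sg_span_subset_supported_polys:
  assumes "sg_ideal H E" "G \<subseteq> supported_polys E"
  shows "sg_span H G \<subseteq> supported_polys E"
proof -
  have closed: "\<And>a b. a \<in> H \<Longrightarrow> b \<in> E \<Longrightarrow> a + b \<in> E"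
    using assms(1) by (simp add: sg_ideal_def)
  have "r * g \<in> supported_polys E" if "r \<in> sgring H" "g \<in> G" for r g
    using mult_mem_supported_polys[of H E r g, OF closed] that assms(2)
    by (auto simp: sgring_eq_supported_polys)
  then show ?thesis
    unfolding sg_span_def
    by (auto intro!: sum_mem_supported_polys)
qed

lemma supported_polys_finitely_generated:
  assumes H: "numerical_semigroup H" and E: "sg_ideal H E" "E \<noteq> {}"
  obtains G where "finite G" "G \<subseteq> supported_polys E"
    "supported_polys E = (sg_span H G :: 'a::field poly set)"
proof -
  obtain B where B: "\<And>n. B < n \<Longrightarrow> n \<in> H"
    using cofinite_nat_setE[OF numerical_semigroupD(3)[OF H]] by blast
  obtain e where e: "e \<in> E"
    using E(2) by blast
  define G where "G = (\<lambda>n. monom (1::'a) n) ` (E \<inter> {..e + B})"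
  have fin: "finite G" and GE: "G \<subseteq> supported_polys E"
    by (auto simp: G_def)
  have monom_mem: "monom c n \<in> sg_span H G" if n: "n \<in> E" for n and c :: 'a
  proof (cases "n \<le> e + B")
    case True
    then have "monom 1 n \<in> G"
      using n by (auto simp: G_def)
    from mult_generator_mem_sg_span[OF fin this, of "monom c 0"] show ?thesis
      using numerical_semigroupD(1)[OF H] by (simp add: sgring_eq_supported_polys mult_monom)
  next
    case False
    then have "monom 1 e \<in> G" "n - e \<in> H"
      using e B by (auto simp: G_def)
    from mult_generator_mem_sg_span[OF fin this(1), of "monom c (n - e)"] show ?thesis
      using \<open>n - e \<in> H\<close> False by (simp add: sgring_eq_supported_polys mult_monom)
  qed
  have "supported_polys E \<subseteq> sg_span H G"
  proof
    fix p :: "'a poly"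
    assume p: "p \<in> supported_polys E"
    show "p \<in> sg_span H G"
    proof (rule mem_if_monoms_mem[OF zero_mem_sg_span add_mem_sg_span])
      show "monom (coeff p i) i \<in> sg_span H G" for i
        using p monom_mem[of i] zero_mem_sg_span[of H G]
        by (cases "coeff p i = 0") (auto simp: mem_supported_polys)
    qed
  qed
  with sg_span_subset_supported_polys[OF E(1) GE] show thesis
    using that fin GE by blast
qed

lemma supported_polys_principal:
  "supported_polys ((+) d ` H) = (sg_span H {monom 1 d} :: 'a::field poly set)"
  by (auto simp: sg_span_singleton sgring_eq_supported_polys mult.commute
      simp flip: image_mult_monom_supported_polys)

lemma principal_if_supported_polys_eq_multiples:
  fixes g :: "'a::field poly"
  assumes "0 \<in> H" and E: "sg_ideal H E" "E \<noteq> {}"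
    and multiples: "supported_polys E = {r * g | r. r \<in> sgring H}"
  shows "E = (+) (degree g) ` H"
proof -
  have "1 \<in> sgring H"
    using assms(1) by (simp add: sgring_eq_supported_polys mem_supported_polys coeff_1)
  then have "1 * g \<in> {r * g | r. r \<in> sgring H}"
    by blast
  then have "g \<in> supported_polys E"
    by (simp add: multiples)
  moreover have "g \<noteq> 0"
    using multiples E(2) supported_polys_eq_zero_iff[of E] by auto
  ultimately have "degree g \<in> E"
    by (simp add: mem_supported_polys)
  moreover have "degree g \<le> n \<and> n - degree g \<in> H" if n: "n \<in> E" for n
  proof -
    have "monom (1::'a) n \<in> supported_polys E"
      using n by simp
    then obtain r where r: "r \<in> supported_polys H" "monom 1 n = r * g"
      using multiples by (auto simp: sgring_eq_supported_polys)
    then have "r \<noteq> 0"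
      by auto
    with r(2) \<open>g \<noteq> 0\<close> have "n = degree r + degree g"
      by (metis degree_monom_eq degree_mult_eq one_neq_zero)
    moreover have "degree r \<in> H"
      using r(1) \<open>r \<noteq> 0\<close> by (simp add: mem_supported_polys)
    ultimately show ?thesis
      by simp
  qed
  ultimately show ?thesis
    using E(1) by (auto simp: mem_add_image_iff sg_ideal_def)
      (metis add.commute le_add_diff_inverse)
qed

lemma mu_zero_ideal: "mu H ({0} :: 'a::field poly set) = 0"
proof -
  have "mu H ({0} :: 'a poly set) \<le> card ({} :: 'a poly set)"
    by (rule mu_le_card) (simp_all add: sg_span_empty)
  then show ?thesis
    by simp
qed

lemma mu_principal_le_1:
  assumes "0 \<in> H"
  shows "mu H (supported_polys ((+) d ` H) :: 'a::field poly set) \<le> 1"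
proof -
  have "mu H (supported_polys ((+) d ` H) :: 'a poly set) \<le> card {monom (1::'a) d}"
  proof (rule mu_le_card)
    show "{monom 1 d} \<subseteq> supported_polys ((+) d ` H)"
      using assms by (simp add: mem_add_image_iff)
  qed (simp_all add: supported_polys_principal)
  then show ?thesis
    by simp
qed

lemma two_le_mu_if_nonprincipal:
  assumes H: "numerical_semigroup H" and E: "sg_ideal H E" "E \<noteq> {}"
    and nonprincipal: "\<And>d. E \<noteq> (+) d ` H"
  shows "2 \<le> mu H (supported_polys E :: 'a::field poly set)"
proof -
  obtain G where "finite G" "G \<subseteq> supported_polys E" "supported_polys E = (sg_span H G :: 'a poly set)"
    using supported_polys_finitely_generated[OF H E] by blast
  then obtain G' where G': "finite G'" "card G' = mu H (supported_polys E :: 'a poly set)"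
    "supported_polys E = (sg_span H G' :: 'a poly set)"
    by (rule minimal_generating_setE)
  show ?thesis
  proof (rule ccontr)
    assume "\<not> 2 \<le> mu H (supported_polys E :: 'a poly set)"
    then have "card G' = 0 \<or> card G' = 1"
      using G'(2) by linarith
    then show False
    proof
      assume "card G' = 0"
      then have "supported_polys E = ({0} :: 'a poly set)"
        using G'(1,3) by (simp add: sg_span_empty)
      with E(2) show False
        using supported_polys_eq_zero_iff by blast
    next
      assume "card G' = 1"
      then obtain g where "G' = {g}"
        by (rule card_1_singletonE)
      then have "supported_polys E = {r * g | r. r \<in> sgring H}"
        using G'(3) by (simp add: sg_span_singleton)
      with nonprincipal show False
        using principal_if_supported_polys_eq_multiples[OF numerical_semigroupD(1)[OF H] E]
        by blast
    qed
  qed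
qed

lemma two_le_mu_supported_polys_iff:
  assumes H: "numerical_semigroup H" and E: "sg_ideal H E"
  shows "2 \<le> mu H (supported_polys E :: 'a::field poly set) \<longleftrightarrow> E \<noteq> {} \<and> (\<forall>d. E \<noteq> (+) d ` H)"
proof
  assume mu: "2 \<le> mu H (supported_polys E :: 'a poly set)"
  show "E \<noteq> {} \<and> (\<forall>d. E \<noteq> (+) d ` H)"
  proof (intro conjI allI notI)
    assume "E = {}"
    with mu show False
      using mu_zero_ideal[of H, where 'a='a] by (simp add: supported_polys_empty)
  next
    fix d
    assume "E = (+) d ` H"
    with mu show False
      using mu_principal_le_1[OF numerical_semigroupD(1)[OF H], of d, where 'a='a] by simp
  qed
qed (use two_le_mu_if_nonprincipal[OF H E] in blast)

section \<open>Gorenstein quotients by ideals with two generators\<close>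

lemma gorenstein_two_le_mu_iff:
  assumes H: "numerical_semigroup H" and E: "sg_ideal H E"
  shows "gorenstein_quot H (supported_polys E :: 'a::field poly set)
           \<and> 2 \<le> mu H (supported_polys E :: 'a poly set)
         \<longleftrightarrow> (\<exists>s\<in>H. E = nondivisors H s) \<and> (\<forall>d. E \<noteq> (+) d ` H)"
proof (cases "E = {}")
  case True
  then have "\<not> 2 \<le> mu H (supported_polys E :: 'a poly set)"
    using two_le_mu_supported_polys_iff[OF H E] by blast
  moreover have "E \<noteq> nondivisors H s" for s
    using nondivisors_nonempty[OF numerical_semigroupD(3)[OF H]] True by blast
  ultimately show ?thesis
    by blast
next
  case False
  have "gorenstein_quot H (supported_polys E :: 'a poly set) \<longleftrightarrow> (\<exists>s\<in>H. E = nondivisors H s)"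
    using gorenstein_quot_supported_polys_iff[OF False, where 'a='a]
      unique_socle_exp_iff_nondivisors[OF H E False] by (rule trans)
  with two_le_mu_supported_polys_iff[OF H E, where 'a='a] False show ?thesis
    by blast
qed

lemma gorenstein_quotients_eq:
  assumes H: "numerical_semigroup H"
  shows "{I :: 'a::field poly set. graded_ideal H I \<and> gorenstein_quot H I \<and> mu H I \<ge> 2}
       = supported_polys ` {nondivisors H s | s. s \<in> H \<and> (\<forall>d. nondivisors H s \<noteq> (+) d ` H)}"
proof (intro equalityI subsetI)
  fix I :: "'a poly set"
  assume "I \<in> {I. graded_ideal H I \<and> gorenstein_quot H I \<and> mu H I \<ge> 2}"
  then have I: "graded_ideal H I" "gorenstein_quot H I" "2 \<le> mu H I"
    by auto
  then obtain E where E: "sg_ideal H E" "I = supported_polys E"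
    using graded_ideal_iff_supported_polys[OF numerical_semigroupD(1)[OF H]] by blast
  with I obtain s where "s \<in> H" "E = nondivisors H s" "\<forall>d. E \<noteq> (+) d ` H"
    using gorenstein_two_le_mu_iff[OF H E(1)] by auto
  with E(2) show "I \<in> supported_polys ` {nondivisors H s | s. s \<in> H \<and> (\<forall>d. nondivisors H s \<noteq> (+) d ` H)}"
    by blast
next
  fix I :: "'a poly set"
  assume "I \<in> supported_polys ` {nondivisors H s | s. s \<in> H \<and> (\<forall>d. nondivisors H s \<noteq> (+) d ` H)}"
  then obtain s where s: "s \<in> H" "\<forall>d. nondivisors H s \<noteq> (+) d ` H"
    and I: "I = supported_polys (nondivisors H s)"
    by blast
  have "sg_ideal H (nondivisors H s)"
    by (rule sg_ideal_nondivisors[OF numerical_semigroupD(2)[OF H]])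
  with s I show "I \<in> {I. graded_ideal H I \<and> gorenstein_quot H I \<and> mu H I \<ge> 2}"
    using gorenstein_two_le_mu_iff[OF H, where 'a='a]
      graded_ideal_iff_supported_polys[OF numerical_semigroupD(1)[OF H], where 'a='a]
    by blast
qed

section \<open>Symmetric semigroups\<close>

lemma symmetric_sgE:
  assumes "numerical_semigroup H" "symmetric_sg H" "H \<noteq> UNIV"
  obtains F where "frob H = int F" "\<And>n. F < n \<Longrightarrow> n \<in> H"
    "\<And>n. n \<le> F \<Longrightarrow> n \<in> H \<longleftrightarrow> F - n \<notin> H"
proof -
  define F where "F = Max (- H)"
  have fin: "finite (- H)" and ne: "- H \<noteq> {}"
    using assms(1,3) numerical_semigroupD(3) by auto
  have F: "F \<notin> H" and above: "\<And>n. n \<notin> H \<Longrightarrow> n \<le> F"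
    using Max_in[OF fin ne] Max_ge[OF fin] by (auto simp: F_def)
  have frob: "frob H = int F"
    unfolding frob_def
  proof (rule Max_eqI)
    show "finite ({-1} \<union> int ` (- H))"
      using fin by simp
    show "int F \<in> {-1} \<union> int ` (- H)"
      using F by blast
  qed (use above in auto)
  have big: "n \<in> H" if "F < n" for n
    using above[of n] that by linarith
  have sym: "n \<in> H \<longleftrightarrow> F - n \<notin> H" if "n \<le> F" for n
  proof -
    have "int n \<in> int ` H \<longleftrightarrow> frob H - int n \<notin> int ` H"
      using assms(2) unfolding symmetric_sg_def by blast
    moreover have "frob H - int n = int (F - n)"
      using frob that by simp
    ultimately show ?thesis
      by (simp add: inj_image_mem_iff)
  qed
  from that[OF frob big sym] show thesis
    by blast
qed

lemma nondivisors_Frobenius_diff: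
  assumes big: "\<And>n. F < n \<Longrightarrow> n \<in> H" and sym: "\<And>n. n \<le> F \<Longrightarrow> n \<in> H \<longleftrightarrow> F - n \<notin> H"
    and "m \<le> F"
  shows "nondivisors H (F - m) = colon_exps H m"
proof (rule set_eqI)
  fix n
  show "n \<in> nondivisors H (F - m) \<longleftrightarrow> n \<in> colon_exps H m"
  proof (cases "n + m \<le> F")
    case True
    then have "F - m - n = F - (n + m)"
      by simp
    then show ?thesis
      using sym[OF True] True by (auto simp: nondivisors_def colon_exps_def)
  next
    case False
    then show ?thesis
      using big[of "n + m"] \<open>m \<le> F\<close> by (auto simp: nondivisors_def colon_exps_def)
  qed
qed

lemma nondivisors_Frobenius_add:
  assumes big: "\<And>n. F < n \<Longrightarrow> n \<in> H" and sym: "\<And>n. n \<le> F \<Longrightarrow> n \<in> H \<longleftrightarrow> F - n \<notin> H"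
  shows "nondivisors H (F + m) = (+) m ` colon_exps H m"
proof (rule set_eqI)
  fix n
  consider "n < m" | "m \<le> n" "n \<le> F + m" | "F + m < n"
    by linarith
  then show "n \<in> nondivisors H (F + m) \<longleftrightarrow> n \<in> (+) m ` colon_exps H m"
  proof cases
    case 1
    then show ?thesis
      using big[of "F + m - n"] by (auto simp: nondivisors_def colon_exps_def mem_add_image_iff)
  next
    case 2
    then have "F + m - n = F - (n - m)" "n - m \<le> F"
      by simp_all
    then show ?thesis
      using sym[of "n - m"] 2 by (auto simp: nondivisors_def colon_exps_def mem_add_image_iff)
  next
    case 3
    then show ?thesis
      using big[of "n - m"] by (auto simp: nondivisors_def colon_exps_def mem_add_image_iff)
  qed
qed

lemma colon_exps_not_principal:
  assumes "0 \<in> H" "m \<notin> H" "F \<notin> H" "\<And>n. F < n \<Longrightarrow> n \<in> H"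
  shows "colon_exps H m \<noteq> (+) d ` H"
proof
  assume principal: "colon_exps H m = (+) d ` H"
  have "d \<in> (+) d ` H"
    using assms(1) by (simp add: mem_add_image_iff)
  then have "d + m \<in> H"
    unfolding principal[symmetric] by (simp add: colon_exps_def)
  then have "0 < d"
    using assms(2) by (cases "d = 0") simp_all
  then have "F + d \<in> colon_exps H m"
    using assms(4) by (simp add: colon_exps_def)
  then have "F + d \<in> (+) d ` H"
    by (simp only: principal)
  with assms(3) show False
    by (simp add: mem_add_image_iff)
qed

lemma add_image_eq_add_imageD:
  fixes m d :: nat
  assumes "0 \<in> H" and eq: "(+) m ` C = (+) d ` H"
  shows "C = (+) (d - m) ` H"
proof -
  have "d \<in> (+) m ` C"
    unfolding eq using assms(1) by (simp add: mem_add_image_iff)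
  then have "m \<le> d"
    by (simp add: mem_add_image_iff)
  have mem: "x \<in> C \<longleftrightarrow> d \<le> m + x \<and> m + x - d \<in> H" for x
  proof -
    have "x \<in> C \<longleftrightarrow> m + x \<in> (+) m ` C"
      by auto
    then show ?thesis
      unfolding eq by (simp add: mem_add_image_iff)
  qed
  show ?thesis
  proof (rule set_eqI)
    fix x
    show "x \<in> C \<longleftrightarrow> x \<in> (+) (d - m) ` H"
      unfolding mem mem_add_image_iff using \<open>m \<le> d\<close> by (auto simp: add.commute)
  qed
qed

lemma colon_exps_of_mem:
  assumes "\<And>a b. a \<in> H \<Longrightarrow> b \<in> H \<Longrightarrow> a + b \<in> H" "m \<in> H"
  shows "colon_exps H m = H"
  using assms by (auto simp: colon_exps_def)

lemma nondivisors_UNIV: "nondivisors UNIV s = (+) (Suc s) ` UNIV"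
  by (rule set_eqI, unfold mem_add_image_iff) (auto simp: nondivisors_def)

lemma shifted_colon_exps_not_principal:
  assumes "0 \<in> H" "m \<notin> H" "F \<notin> H" "\<And>n. F < n \<Longrightarrow> n \<in> H"
  shows "(+) m ` colon_exps H m \<noteq> (+) d ` H"
  using colon_exps_not_principal[OF assms] add_image_eq_add_imageD[OF assms(1)] by metis

lemma Frobenius_gap:
  fixes H :: "nat set"
  assumes "0 \<in> H" and big: "\<And>n. F < n \<Longrightarrow> n \<in> H"
    and sym: "\<And>n. n \<le> F \<Longrightarrow> n \<in> H \<longleftrightarrow> F - n \<notin> H" and m: "m \<notin> H"
  shows "m \<le> F" "F - m \<in> H" "F + m \<in> H"
proof -
  show "m \<le> F"
    using big[of m] m leI by blast
  then show "F - m \<in> H"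
    using sym m by blast
  have "m \<noteq> 0"
    using assms(1) m by metis
  then show "F + m \<in> H"
    using big[of "F + m"] by simp
qed

lemma nonprincipal_nondivisors_Frobenius:
  assumes "0 \<in> H" and closed: "\<And>a b. a \<in> H \<Longrightarrow> b \<in> H \<Longrightarrow> a + b \<in> H"
    and big: "\<And>n. F < n \<Longrightarrow> n \<in> H" and sym: "\<And>n. n \<le> F \<Longrightarrow> n \<in> H \<longleftrightarrow> F - n \<notin> H"
    and s: "s \<in> H" "\<And>d. nondivisors H s \<noteq> (+) d ` H"
  obtains m where "m \<notin> H"
    "nondivisors H s = colon_exps H m \<or> nondivisors H s = (+) m ` colon_exps H m"
proof -
  have "s \<noteq> F"
    using sym[of F] assms(1) s(1) by auto
  then consider "s < F" | "F < s"
    by linarith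
  then show thesis
  proof cases
    case 1
    then have "F - s \<notin> H"
      using sym[of "F - s"] s(1) by simp
    moreover have "nondivisors H s = colon_exps H (F - s)"
      using nondivisors_Frobenius_diff[OF big sym, of "F - s"] 1 by simp
    ultimately show thesis
      using that by blast
  next
    case 2
    then have E: "nondivisors H s = (+) (s - F) ` colon_exps H (s - F)"
      using nondivisors_Frobenius_add[OF big sym, of "s - F"] by simp
    moreover have "s - F \<notin> H"
      using s(2) E colon_exps_of_mem[OF closed] by metis
    ultimately show thesis
      using that by blast
  qed
qed

lemma nonprincipal_nondivisors_eq_colon_exps:
  assumes H: "numerical_semigroup H" and sym: "symmetric_sg H"
  shows "{nondivisors H s | s. s \<in> H \<and> (\<forall>d. nondivisors H s \<noteq> (+) d ` H)}
       = {colon_exps H m | m. m \<notin> H} \<union> {(+) m ` colon_exps H m | m. m \<notin> H}"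
proof (cases "H = UNIV")
  case True
  then have "{nondivisors H s | s. s \<in> H \<and> (\<forall>d. nondivisors H s \<noteq> (+) d ` H)} = {}"
    using nondivisors_UNIV by blast
  with True show ?thesis
    by simp
next
  case False
  note H0 = numerical_semigroupD(1)[OF H] and closed = numerical_semigroupD(2)[OF H]
  obtain F where big: "\<And>n. F < n \<Longrightarrow> n \<in> H"
    and F_sym: "\<And>n. n \<le> F \<Longrightarrow> n \<in> H \<longleftrightarrow> F - n \<notin> H"
    using symmetric_sgE[OF H sym False] by metis
  have F: "F \<notin> H"
    using F_sym[of F] H0 by simp
  show ?thesis
  proof (intro equalityI subsetI)
    fix E
    assume "E \<in> {nondivisors H s | s. s \<in> H \<and> (\<forall>d. nondivisors H s \<noteq> (+) d ` H)}"
    then obtain s where s: "s \<in> H" "\<And>d. nondivisors H s \<noteq> (+) d ` H" and E: "E = nondivisors H s"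
      by blast
    obtain m where "m \<notin> H" "E = colon_exps H m \<or> E = (+) m ` colon_exps H m"
      using nonprincipal_nondivisors_Frobenius[OF H0 closed big F_sym s] unfolding E .
    then show "E \<in> {colon_exps H m | m. m \<notin> H} \<union> {(+) m ` colon_exps H m | m. m \<notin> H}"
      by blast
  next
    fix E
    assume "E \<in> {colon_exps H m | m. m \<notin> H} \<union> {(+) m ` colon_exps H m | m. m \<notin> H}"
    then obtain m where m: "m \<notin> H" "E = colon_exps H m \<or> E = (+) m ` colon_exps H m"
      by blast
    note gap = Frobenius_gap[OF H0 big F_sym m(1)]
    have "E = nondivisors H (F - m) \<or> E = nondivisors H (F + m)"
      using m(2) nondivisors_Frobenius_diff[OF big F_sym gap(1)]
        nondivisors_Frobenius_add[OF big F_sym] by metis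
    moreover have "\<forall>d. E \<noteq> (+) d ` H"
      using m(2) colon_exps_not_principal[OF H0 m(1) F big]
        shifted_colon_exps_not_principal[OF H0 m(1) F big] by metis
    ultimately show "E \<in> {nondivisors H s | s. s \<in> H \<and> (\<forall>d. nondivisors H s \<noteq> (+) d ` H)}"
      using gap(2,3) by blast
  qed
qed

lemma a_quot_supported_polys: "a_quot H (supported_polys E :: 'a::field poly set) = Max (H - E)"
proof -
  have "{n. \<exists>c::'a. monom c n \<in> sgring H \<and> monom c n \<notin> supported_polys E} = H - E"
    by (auto simp: sgring_eq_supported_polys intro: exI[of _ 1])
  then show ?thesis
    by (simp add: a_quot_def)
qed

lemma a_quot_colon_Frobenius:
  assumes "0 \<in> H" and big: "\<And>n. F < n \<Longrightarrow> n \<in> H"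
    and sym: "\<And>n. n \<le> F \<Longrightarrow> n \<in> H \<longleftrightarrow> F - n \<notin> H" and m: "m \<notin> H"
  shows "a_quot H (colon H m :: 'a::field poly set) = F - m"
    and "a_quot H (shifted_colon H m :: 'a::field poly set) = F + m"
proof -
  note gap = Frobenius_gap[OF assms]
  have "colon H m = (supported_polys (nondivisors H (F - m)) :: 'a poly set)"
    "shifted_colon H m = (supported_polys (nondivisors H (F + m)) :: 'a poly set)"
    using nondivisors_Frobenius_diff[OF big sym gap(1)] nondivisors_Frobenius_add[OF big sym]
    by (simp_all add: colon_eq_supported_polys shifted_colon_eq_supported_polys)
  then show "a_quot H (colon H m :: 'a poly set) = F - m"
    and "a_quot H (shifted_colon H m :: 'a poly set) = F + m"
    using gap(2,3) by (simp_all add: a_quot_supported_polys Max_diff_nondivisors[OF assms(1)])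
qed

theorem corollary4p2:
  fixes H :: "nat set"
  assumes "numerical_semigroup H" and "symmetric_sg H"
  shows "{I :: 'a::field poly set. graded_ideal H I \<and> gorenstein_quot H I \<and> mu H I \<ge> 2}
           = {colon H m | m. m \<notin> H} \<union> {shifted_colon H m | m. m \<notin> H}
         \<and> (\<forall>m. m \<notin> H \<longrightarrow>
              int (a_quot H (colon H m :: 'a poly set)) = frob H - int m
            \<and> int (a_quot H (shifted_colon H m :: 'a poly set)) = frob H + int m)"
proof -
  have "{I :: 'a poly set. graded_ideal H I \<and> gorenstein_quot H I \<and> mu H I \<ge> 2}
      = supported_polys ` ({colon_exps H m | m. m \<notin> H} \<union> {(+) m ` colon_exps H m | m. m \<notin> H})"
    using gorenstein_quotients_eq[OF assms(1)] nonprincipal_nondivisors_eq_colon_exps[OF assms]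
    by simp
  also have "\<dots> = {colon H m | m. m \<notin> H} \<union> {shifted_colon H m | m. m \<notin> H}"
    by (auto simp: colon_eq_supported_polys shifted_colon_eq_supported_polys)
  finally have ideals: "{I :: 'a poly set. graded_ideal H I \<and> gorenstein_quot H I \<and> mu H I \<ge> 2}
      = {colon H m | m. m \<notin> H} \<union> {shifted_colon H m | m. m \<notin> H}" .
  have "int (a_quot H (colon H m :: 'a poly set)) = frob H - int m
      \<and> int (a_quot H (shifted_colon H m :: 'a poly set)) = frob H + int m" if m: "m \<notin> H" for m
  proof -
    obtain F where frob: "frob H = int F" and big: "\<And>n. F < n \<Longrightarrow> n \<in> H"
      and sym: "\<And>n. n \<le> F \<Longrightarrow> n \<in> H \<longleftrightarrow> F - n \<notin> H"
      using symmetric_sgE[OF assms] m by blast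
    note H0 = numerical_semigroupD(1)[OF assms(1)]
    from frob Frobenius_gap(1)[OF H0 big sym m] show ?thesis
      using a_quot_colon_Frobenius[OF H0 big sym m, where 'a='a]
      by simp
  qed
  with ideals show ?thesis
    by blast
qed

end
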